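(* Let $r\in\mathbb{N}$, let $P=(p_{i,j})$ be a symmetric $r\times r$ matrix with entries in $[0,1]$, let $k\in\mathbb{N}$ and $\vec T,\vec n\in\mathbb{N}^r$ be such that $k\leq\vec T(i)\leq n_i$ for all $i$. Let $G\sim G(\vec n,P)$, let $i\in[r]$ and let $v_i\in V_i$ be a vertex of type $i$. Then \[\Pr[\mathrm{pop}(\mathrm{GW}(\vec n-\vec T,P,e_i))\geq k]\leq\Pr[|\mathrm{CC}(v_i)|\geq k]\leq\Pr[\mathrm{pop}(\mathrm{GW}(\vec n,P,e_i))\geq k].\]
   Context: $G(\vec n,P)$: vertex set a disjoint union $V_1\cup\cdots\cup V_r$ with $|V_i|=n_i$; each pair $v\in V_i$, $u\in V_j$ of distinct vertices is an edge independently with probability $p_{i,j}$. $\mathrm{CC}(v)$ is the connected component of $v$. For $\vec m\in\mathbb{N}^r$ and $x\in\mathbb{N}^r$, $\mathrm{GW}(\vec m,P,x)$ is the multi-type Galton–Watson process started with $x(i)$ individuals of type $i$, in which each individual of type $i$ independently has, for each $j$, an independent $\mathrm{Binomial}(m_j,p_{i,j})$ number of children of type $j$; $\mathrm{pop}(\cdot)$ is its total population (including the initial individuals), defined as $\infty$ if the process does not terminate. $e_i$ is the $i$-th standard basis vector. *)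

theory Defs
  imports "HOL-Probability.Probability"
begin

(* Types are indexed by 0..r-1; a vertex of type i is a pair (i,a) with a < n i. *)
definition vertices :: "nat \<Rightarrow> (nat \<Rightarrow> nat) \<Rightarrow> (nat \<times> nat) set" where
  "vertices r n = {(i,a). i < r \<and> a < n i}"

definition pot_edges :: "nat \<Rightarrow> (nat \<Rightarrow> nat) \<Rightarrow> (nat \<times> nat) set set" where
  "pot_edges r n = {{u,v} | u v. u \<in> vertices r n \<and> v \<in> vertices r n \<and> u \<noteq> v}"

(* probability of the edge {u,v}: p_{type u, type v} (well defined as P is symmetric) *)
definition edge_prob :: "(nat \<Rightarrow> nat \<Rightarrow> real) \<Rightarrow> (nat \<times> nat) set \<Rightarrow> real" where
  "edge_prob P e = (SOME q. \<exists>u v. e = {u,v} \<and> q = P (fst u) (fst v))"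

definition Gnp :: "nat \<Rightarrow> (nat \<Rightarrow> nat) \<Rightarrow> (nat \<Rightarrow> nat \<Rightarrow> real) \<Rightarrow> ((nat \<times> nat) set \<Rightarrow> bool) pmf" where
  "Gnp r n P = Pi_pmf (pot_edges r n) False (\<lambda>e. bernoulli_pmf (edge_prob P e))"

definition adj_rel :: "((nat \<times> nat) set \<Rightarrow> bool) \<Rightarrow> ((nat \<times> nat) \<times> (nat \<times> nat)) set" where
  "adj_rel G = {(u,w). G {u,w}}"

definition CC :: "((nat \<times> nat) set \<Rightarrow> bool) \<Rightarrow> nat \<times> nat \<Rightarrow> (nat \<times> nat) set" where
  "CC G v = (adj_rel G)\<^sup>* `` {v}"

definition vadd_pmf :: "(nat \<Rightarrow> nat) pmf \<Rightarrow> (nat \<Rightarrow> nat) pmf \<Rightarrow> (nat \<Rightarrow> nat) pmf" where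
  "vadd_pmf A B = bind_pmf A (\<lambda>a. map_pmf (\<lambda>b. (\<lambda>j. a j + b j)) B)"

(* children vector of one individual of type i: independent Binomial(m_j, p_ij), j < r *)
definition offspring :: "nat \<Rightarrow> (nat \<Rightarrow> nat) \<Rightarrow> (nat \<Rightarrow> nat \<Rightarrow> real) \<Rightarrow> nat \<Rightarrow> (nat \<Rightarrow> nat) pmf" where
  "offspring r m P i = Pi_pmf {..<r} 0 (\<lambda>j. binomial_pmf (m j) (P i j))"

primrec iid_sum :: "nat \<Rightarrow> (nat \<Rightarrow> nat) pmf \<Rightarrow> (nat \<Rightarrow> nat) pmf" where
  "iid_sum 0 D = return_pmf (\<lambda>_. 0)"
| "iid_sum (Suc N) D = vadd_pmf (iid_sum N D) D"

(* total children of the individuals of types < i of generation z *)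
primrec gw_step_aux :: "nat \<Rightarrow> (nat \<Rightarrow> nat) \<Rightarrow> (nat \<Rightarrow> nat \<Rightarrow> real) \<Rightarrow> (nat \<Rightarrow> nat) \<Rightarrow> nat \<Rightarrow> (nat \<Rightarrow> nat) pmf" where
  "gw_step_aux r m P z 0 = return_pmf (\<lambda>_. 0)"
| "gw_step_aux r m P z (Suc i) = vadd_pmf (gw_step_aux r m P z i) (iid_sum (z i) (offspring r m P i))"

definition gw_step :: "nat \<Rightarrow> (nat \<Rightarrow> nat) \<Rightarrow> (nat \<Rightarrow> nat \<Rightarrow> real) \<Rightarrow> (nat \<Rightarrow> nat) \<Rightarrow> (nat \<Rightarrow> nat) pmf" where
  "gw_step r m P z = gw_step_aux r m P z r"

definition gen_size :: "nat \<Rightarrow> (nat \<Rightarrow> nat) \<Rightarrow> nat" where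
  "gen_size r z = (\<Sum>i<r. z i)"

(* joint law of (number of individuals in generations 0..T, generation T) *)
primrec gw_state :: "nat \<Rightarrow> (nat \<Rightarrow> nat) \<Rightarrow> (nat \<Rightarrow> nat \<Rightarrow> real) \<Rightarrow> (nat \<Rightarrow> nat) \<Rightarrow> nat \<Rightarrow> (nat \<times> (nat \<Rightarrow> nat)) pmf" where
  "gw_state r m P x 0 = return_pmf (gen_size r x, x)"
| "gw_state r m P x (Suc T) = bind_pmf (gw_state r m P x T)
      (\<lambda>(s, z). map_pmf (\<lambda>z'. (s + gen_size r z', z')) (gw_step r m P z))"

(* Pr[pop(GW(m,P,x)) >= k]: the event is the increasing union over T of
   {individuals in generations 0..T >= k}, so its probability is the supremum *)
definition gw_pop_ge_prob :: "nat \<Rightarrow> (nat \<Rightarrow> nat) \<Rightarrow> (nat \<Rightarrow> nat \<Rightarrow> real) \<Rightarrow> (nat \<Rightarrow> nat) \<Rightarrow> nat \<Rightarrow> real" where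
  "gw_pop_ge_prob r m P x k = (SUP T. measure_pmf.prob (gw_state r m P x T) {sz. k \<le> fst sz})"

definition unit_vec :: "nat \<Rightarrow> nat \<Rightarrow> nat" where
  "unit_vec i = (\<lambda>j. if j = i then 1 else 0)"

end

theory Submission
  imports Defs "HOL-Library.Function_Algebras" "HOL-Library.Product_Plus"
begin

text \<open>
  Explore the component of \<open>(i, a)\<close> one vertex at a time. Exposing the edges from an explored
  vertex of type \<open>t\<close> to the vertices not yet reached reveals new neighbours whose numbers by type
  are independent \<open>Binomial(u j, P t j)\<close>, where \<open>u j\<close> is the number of unreached vertices of
  type \<open>j\<close>, and leaves a random graph on the remaining vertices that is independent of them: a
  Galton-Watson step with offspring parameter \<open>u\<close>. Always \<open>u j \<le> n j\<close>, and while fewer than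
  \<open>k \<le> Tv j\<close> vertices have been reached, \<open>u j \<ge> n j - Tv j\<close>. Binomial offspring vectors are
  stochastically monotone in \<open>u\<close>, and the tail of the Galton-Watson population is monotone in the
  initial population and in the number of generations, so induction on \<open>k\<close> compares the tail of
  the component size with both Galton-Watson tails.
\<close>

lemma measure_pmf_prob_bind_pmf:
  "measure_pmf.prob (bind_pmf M N) X = (\<integral>x. measure_pmf.prob (N x) X \<partial>M)"
proof -
  have "ennreal (measure_pmf.prob (bind_pmf M N) X) = (\<integral>\<^sup>+x. ennreal (measure_pmf.prob (N x) X) \<partial>M)"
    by (simp add: measure_pmf.emeasure_eq_measure[symmetric])
  also have "\<dots> = ennreal (\<integral>x. measure_pmf.prob (N x) X \<partial>M)"
    by (intro nn_integral_eq_integral measure_pmf.integrable_const_bound[where B=1]) auto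
  finally show ?thesis by (simp add: integral_nonneg_AE)
qed

lemma integral_mono_pmf_bounded:
  fixes f g :: "'a \<Rightarrow> real"
  assumes "\<And>x. x \<in> set_pmf M \<Longrightarrow> f x \<le> g x"
    and "\<And>x. \<bar>f x\<bar> \<le> B" "\<And>x. \<bar>g x\<bar> \<le> B"
  shows "(\<integral>x. f x \<partial>M) \<le> (\<integral>x. g x \<partial>M)"
proof (rule integral_mono_AE)
  show "integrable M f" "integrable M g"
    using assms(2,3) by (auto intro: measure_pmf.integrable_const_bound[where B=B])
  show "AE x in M. f x \<le> g x"
    using assms(1) by (simp add: AE_measure_pmf_iff)
qed

definition add_pmf :: "'a::comm_monoid_add pmf \<Rightarrow> 'a pmf \<Rightarrow> 'a pmf" where
  "add_pmf A B = bind_pmf A (\<lambda>a. map_pmf (\<lambda>b. a + b) B)"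

lemma add_pmf_commute: "add_pmf A B = add_pmf B A"
  unfolding add_pmf_def map_pmf_def
  by (subst bind_commute_pmf) (simp add: add.commute)

lemma add_pmf_assoc: "add_pmf (add_pmf A B) C = add_pmf A (add_pmf B C)"
  unfolding add_pmf_def map_pmf_def
  by (simp add: bind_assoc_pmf bind_return_pmf add.assoc)

lemma add_pmf_add_pmf_swap:
  "add_pmf (add_pmf A B) (add_pmf C D) = add_pmf (add_pmf A C) (add_pmf B D)"
  by (metis add_pmf_assoc add_pmf_commute)

lemma add_pmf_return_0 [simp]: "add_pmf A (return_pmf 0) = A"
  unfolding add_pmf_def by (simp add: bind_return_pmf')

lemma add_pmf_return_left: "add_pmf (return_pmf c) B = map_pmf (\<lambda>b. c + b) B"
  unfolding add_pmf_def by (simp add: bind_return_pmf)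

lemma add_pmf_bind_left: "add_pmf (bind_pmf Y F) B = bind_pmf Y (\<lambda>y. add_pmf (F y) B)"
  unfolding add_pmf_def by (simp add: bind_assoc_pmf)

lemma add_pmf_map_Suc: "add_pmf (map_pmf Suc A) B = map_pmf Suc (add_pmf A B)"
  unfolding add_pmf_def map_pmf_def by (simp add: bind_assoc_pmf bind_return_pmf)

lemma map_pmf_add_pmf:
  assumes "\<And>a b. h (a + b) = g a + g' b"
  shows "map_pmf h (add_pmf A B) = add_pmf (map_pmf g A) (map_pmf g' B)"
  unfolding add_pmf_def map_pmf_def
  by (simp add: bind_assoc_pmf bind_return_pmf assms)

lemma bind_pmf_add_pmf:
  assumes "\<And>a b. K (a + b) = add_pmf (K a) (K b)"
  shows "bind_pmf (add_pmf A B) K = add_pmf (bind_pmf A K) (bind_pmf B K)"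
proof -
  have "bind_pmf (add_pmf A B) K = bind_pmf A (\<lambda>a. bind_pmf B (\<lambda>b. K (a + b)))"
    unfolding add_pmf_def map_pmf_def by (simp add: bind_assoc_pmf bind_return_pmf)
  also have "\<dots> = bind_pmf A (\<lambda>a. bind_pmf B (\<lambda>b. add_pmf (K a) (K b)))"
    by (simp add: assms)
  also have "\<dots> = add_pmf (bind_pmf A K) (bind_pmf B K)"
    unfolding add_pmf_def map_pmf_def
    by (simp add: bind_assoc_pmf bind_return_pmf)
       (intro bind_pmf_cong refl, subst bind_commute_pmf, rule refl)
  finally show ?thesis .
qed

lemma vadd_pmf_eq_add_pmf: "vadd_pmf A B = add_pmf A B"
  unfolding vadd_pmf_def add_pmf_def plus_fun_def ..

lemma return_pmf_zero_fun: "return_pmf (\<lambda>_. 0::nat) = return_pmf 0"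
  by (simp add: zero_fun_def)

definition tail_prob :: "nat pmf \<Rightarrow> nat \<Rightarrow> real" where
  "tail_prob A k = measure_pmf.prob A {k..}"

lemma tail_prob_bounds: "0 \<le> tail_prob A k" "tail_prob A k \<le> 1" "\<bar>tail_prob A k\<bar> \<le> 1"
  unfolding tail_prob_def by auto

lemma tail_prob_0 [simp]: "tail_prob A 0 = 1"
  unfolding tail_prob_def by simp

lemma tail_prob_return_pmf: "tail_prob (return_pmf s) k = (if k \<le> s then 1 else 0)"
  unfolding tail_prob_def by (simp add: indicator_def)

lemma tail_prob_bind_pmf: "tail_prob (bind_pmf Y F) k = (\<integral>y. tail_prob (F y) k \<partial>Y)"
  unfolding tail_prob_def by (rule measure_pmf_prob_bind_pmf)

lemma tail_prob_map_Suc [simp]: "tail_prob (map_pmf Suc A) (Suc k) = tail_prob A k"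
proof -
  have "Suc -` {Suc k..} = {k..}" by auto
  then show ?thesis unfolding tail_prob_def by simp
qed

lemma tail_prob_add_pmf: "tail_prob (add_pmf A B) k = (\<integral>a. tail_prob B (k - a) \<partial>A)"
proof -
  have "(\<lambda>b. a + b) -` {k..} = {k - a..}" for a by auto
  then show ?thesis unfolding add_pmf_def tail_prob_bind_pmf by (simp add: tail_prob_def)
qed

lemma tail_prob_bind_pmf_mono:
  assumes "\<And>y. y \<in> set_pmf Y \<Longrightarrow> tail_prob (F y) k \<le> tail_prob (G y) k"
  shows "tail_prob (bind_pmf Y F) k \<le> tail_prob (bind_pmf Y G) k"
  unfolding tail_prob_bind_pmf
  by (rule integral_mono_pmf_bounded[where B=1]) (auto simp: assms tail_prob_bounds)

lemma tail_prob_add_pmf_mono: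
  assumes "\<And>k. tail_prob B k \<le> tail_prob B' k"
  shows "tail_prob (add_pmf A B) k \<le> tail_prob (add_pmf A B') k"
  unfolding tail_prob_add_pmf
  by (rule integral_mono_pmf_bounded[where B=1]) (auto simp: assms tail_prob_bounds)

lemma tail_prob_add_pmf_mono_left:
  assumes "\<And>k. tail_prob B k \<le> tail_prob B' k"
  shows "tail_prob (add_pmf B A) k \<le> tail_prob (add_pmf B' A) k"
  using tail_prob_add_pmf_mono[OF assms] by (simp add: add_pmf_commute)

section \<open>The Galton-Watson population\<close>

lemma iid_sum_add: "iid_sum (a + b) D = add_pmf (iid_sum a D) (iid_sum b D)"
  by (induction b) (simp_all add: vadd_pmf_eq_add_pmf add_pmf_assoc return_pmf_zero_fun)

lemma gw_step_aux_add:
  "gw_step_aux r m P (x + y) i = add_pmf (gw_step_aux r m P x i) (gw_step_aux r m P y i)"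
  by (induction i)
     (simp_all add: vadd_pmf_eq_add_pmf iid_sum_add add_pmf_add_pmf_swap return_pmf_zero_fun)

lemma gw_step_add: "gw_step r m P (x + y) = add_pmf (gw_step r m P x) (gw_step r m P y)"
  unfolding gw_step_def by (rule gw_step_aux_add)

lemma gen_size_add: "gen_size r (x + y) = gen_size r x + gen_size r y"
  unfolding gen_size_def by (simp add: sum.distrib)

lemma gw_state_add:
  "gw_state r m P (x + y) T = add_pmf (gw_state r m P x T) (gw_state r m P y T)"
proof (induction T)
  case 0
  show ?case
    by (simp add: add_pmf_return_left) (simp add: gen_size_add[unfolded plus_fun_def] plus_fun_def)
next
  case (Suc T)
  let ?K = "\<lambda>(s, z). map_pmf (\<lambda>z'. (s + gen_size r z', z')) (gw_step r m P z)"
  have "?K (a + b) = add_pmf (?K a) (?K b)" for a b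
    by (cases a; cases b) (auto simp: gw_step_add gen_size_add intro!: map_pmf_add_pmf)
  then show ?case
    by (simp only: gw_state.simps(2) Suc.IH bind_pmf_add_pmf)
qed

lemma gw_state_Suc_first_generation:
  "gw_state r m P x (Suc T) =
     bind_pmf (gw_step r m P x)
       (\<lambda>z. map_pmf (\<lambda>(s, z'). (gen_size r x + s, z')) (gw_state r m P z T))"
proof (induction T)
  case 0
  show ?case by (simp add: bind_return_pmf map_pmf_def)
next
  case (Suc T)
  show ?case
    by (subst gw_state.simps(2), subst Suc)
       (simp add: bind_assoc_pmf map_pmf_def bind_return_pmf split_def add.assoc)
qed

definition gw_pop :: "nat \<Rightarrow> (nat \<Rightarrow> nat) \<Rightarrow> (nat \<Rightarrow> nat \<Rightarrow> real) \<Rightarrow> (nat \<Rightarrow> nat) \<Rightarrow> nat \<Rightarrow> nat pmf" where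
  "gw_pop r m P x T = map_pmf fst (gw_state r m P x T)"

lemma gw_pop_ge_prob_eq_SUP:
  "gw_pop_ge_prob r m P x k = (SUP T. tail_prob (gw_pop r m P x T) k)"
  unfolding gw_pop_ge_prob_def tail_prob_def gw_pop_def by (simp add: vimage_def)

lemma gw_pop_add: "gw_pop r m P (x + y) T = add_pmf (gw_pop r m P x T) (gw_pop r m P y T)"
  unfolding gw_pop_def gw_state_add by (rule map_pmf_add_pmf) simp

lemma gw_pop_zero: "gw_pop r m P (\<lambda>_. 0) T = return_pmf 0"
proof -
  have step: "gw_step_aux r m P (\<lambda>_. 0) i = return_pmf (\<lambda>_. 0)" for i
    by (induction i) (simp_all add: vadd_pmf_def bind_return_pmf bind_return_pmf')
  have "gw_state r m P (\<lambda>_. 0) T = return_pmf (0, \<lambda>_. 0)"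
    by (induction T) (simp_all add: gw_step_def step gen_size_def bind_return_pmf)
  then show ?thesis by (simp add: gw_pop_def)
qed

lemma gw_step_unit_vec: "t < r \<Longrightarrow> gw_step r m P (unit_vec t) = offspring r m P t"
proof -
  have "gw_step_aux r m P (unit_vec t) i = (if t < i then offspring r m P t else return_pmf 0)" for i
    by (induction i)
       (auto simp: vadd_pmf_eq_add_pmf unit_vec_def add_pmf_return_left return_pmf_zero_fun
         pmf.map_ident less_Suc_eq)
  then show "t < r \<Longrightarrow> ?thesis" by (simp add: gw_step_def)
qed

lemma gen_size_unit_vec: "t < r \<Longrightarrow> gen_size r (unit_vec t) = 1"
  unfolding gen_size_def unit_vec_def by simp

lemma tail_prob_gw_pop_Suc: "tail_prob (gw_pop r m P x T) k \<le> tail_prob (gw_pop r m P x (Suc T)) k"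
proof -
  have "gw_pop r m P x T = bind_pmf (gw_state r m P x T) (\<lambda>sz. return_pmf (fst sz))"
    unfolding gw_pop_def map_pmf_def ..
  moreover have "gw_pop r m P x (Suc T) = bind_pmf (gw_state r m P x T)
      (\<lambda>sz. map_pmf (\<lambda>z'. fst sz + gen_size r z') (gw_step r m P (snd sz)))"
    unfolding gw_pop_def by (simp add: map_bind_pmf pmf.map_comp o_def split_def)
  moreover have "tail_prob (return_pmf s) k \<le> tail_prob (map_pmf (\<lambda>z'. s + gen_size r z') Z) k"
    for s and Z :: "(nat \<Rightarrow> nat) pmf"
  proof (cases "k \<le> s")
    case True
    then have "(\<lambda>z'. s + gen_size r z') -` {k..} = UNIV" by auto
    then show ?thesis by (simp add: tail_prob_def)
  qed (simp add: tail_prob_return_pmf tail_prob_bounds)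
  ultimately show ?thesis by (simp add: tail_prob_bind_pmf_mono)
qed

lemma tail_prob_gw_pop_mono_init:
  assumes "\<And>j. x j \<le> x' j"
  shows "tail_prob (gw_pop r m P x T) k \<le> tail_prob (gw_pop r m P x' T) k"
proof -
  have "x' = x + (\<lambda>j. x' j - x j)" using assms by (auto simp: fun_eq_iff)
  then have "gw_pop r m P x' T = add_pmf (gw_pop r m P x T) (gw_pop r m P (\<lambda>j. x' j - x j) T)"
    by (metis gw_pop_add)
  moreover have "tail_prob (add_pmf (gw_pop r m P x T) (return_pmf 0)) k
      \<le> tail_prob (add_pmf (gw_pop r m P x T) (gw_pop r m P (\<lambda>j. x' j - x j) T)) k"
    by (rule tail_prob_add_pmf_mono) (auto simp: tail_prob_return_pmf tail_prob_bounds)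
  ultimately show ?thesis by simp
qed

definition gw_first_step ::
  "nat \<Rightarrow> (nat \<Rightarrow> nat) \<Rightarrow> (nat \<Rightarrow> nat \<Rightarrow> real) \<Rightarrow> nat \<Rightarrow> (nat \<Rightarrow> nat) \<Rightarrow> nat \<Rightarrow> nat pmf" where
  "gw_first_step r m P t x T =
     bind_pmf (offspring r m P t) (\<lambda>y. map_pmf Suc (gw_pop r m P (x + y) T))"

lemma tail_prob_gw_first_step_Suc:
  "tail_prob (gw_first_step r m P t x T) (Suc k)
     = (\<integral>y. tail_prob (gw_pop r m P (x + y) T) k \<partial>offspring r m P t)"
  unfolding gw_first_step_def tail_prob_bind_pmf by simp

lemma gw_first_step_eq_add_pmf:
  assumes "t < r"
  shows "gw_first_step r m P t x T = add_pmf (gw_pop r m P (unit_vec t) (Suc T)) (gw_pop r m P x T)"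
proof -
  have unit_Suc: "gw_pop r m P (unit_vec t) (Suc T)
      = bind_pmf (offspring r m P t) (\<lambda>y. map_pmf Suc (gw_pop r m P y T))"
    unfolding gw_pop_def gw_state_Suc_first_generation gw_step_unit_vec[OF assms]
      gen_size_unit_vec[OF assms]
    by (simp add: map_bind_pmf pmf.map_comp o_def split_def)
  show ?thesis
    unfolding gw_first_step_def unit_Suc add_pmf_bind_left add_pmf_map_Suc gw_pop_add[symmetric]
    by (simp add: add.commute)
qed

lemma tail_prob_gw_first_step_le:
  assumes "t < r"
  shows "tail_prob (gw_first_step r m P t x T) k
       \<le> tail_prob (gw_pop r m P (unit_vec t + x) (Suc T)) k"
  unfolding gw_first_step_eq_add_pmf[OF assms] gw_pop_add
  by (intro tail_prob_add_pmf_mono tail_prob_gw_pop_Suc)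

lemma tail_prob_le_gw_first_step:
  assumes "t < r"
  shows "tail_prob (gw_pop r m P (unit_vec t + x) T) k \<le> tail_prob (gw_first_step r m P t x T) k"
  unfolding gw_first_step_eq_add_pmf[OF assms] gw_pop_add
  by (intro tail_prob_add_pmf_mono_left tail_prob_gw_pop_Suc)

section \<open>Offspring vectors as counts of Bernoulli successes\<close>

lemma binomial_pmf_eq_count_Pi_bernoulli:
  assumes "finite X" "p \<in> {0..1}" "\<And>x. x \<in> X \<Longrightarrow> q x = p"
  shows "binomial_pmf (card X) p
       = map_pmf (\<lambda>f. card {x\<in>X. f x}) (Pi_pmf X False (\<lambda>x. bernoulli_pmf (q x)))"
proof -
  have "Pi_pmf X False (\<lambda>x. bernoulli_pmf (q x)) = Pi_pmf X False (\<lambda>_. bernoulli_pmf p)"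
    by (rule Pi_pmf_cong) (auto simp: assms(3))
  then show ?thesis using binomial_pmf_altdef'[OF assms(1) refl assms(2)] by simp
qed

lemma map_pmf_count_Pi_bernoulli:
  fixes lab :: "'a \<Rightarrow> 'b" and p :: "'b \<Rightarrow> real"
  assumes "finite J" "finite X" "lab ` X \<subseteq> J" "\<And>j. j \<in> J \<Longrightarrow> p j \<in> {0..1}"
  shows "map_pmf (\<lambda>g j. card {x\<in>X. lab x = j \<and> g x})
           (Pi_pmf X False (\<lambda>x. bernoulli_pmf (p (lab x))))
       = Pi_pmf J 0 (\<lambda>j. binomial_pmf (card {x\<in>X. lab x = j}) (p j))"
  using assms
proof (induction J arbitrary: X rule: finite_induct)
  case empty
  then show ?case by simp
next
  case (insert j J)
  let ?q = "\<lambda>x. bernoulli_pmf (p (lab x))"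
  let ?count = "\<lambda>Y g i. card {x\<in>Y. lab x = i \<and> g x}"
  define Xj where "Xj = {x\<in>X. lab x = j}"
  define X' where "X' = X - Xj"
  have fin: "finite Xj" "finite X'" using insert.prems by (auto simp: Xj_def X'_def)
  have X'J: "lab ` X' \<subseteq> J" using insert.prems by (auto simp: Xj_def X'_def)
  have binom_j: "binomial_pmf (card Xj) (p j) = map_pmf (\<lambda>f. card {x\<in>Xj. f x}) (Pi_pmf Xj False ?q)"
    by (rule binomial_pmf_eq_count_Pi_bernoulli) (use fin insert.prems in \<open>auto simp: Xj_def\<close>)
  have binom_J: "Pi_pmf J 0 (\<lambda>i. binomial_pmf (card {x\<in>X. lab x = i}) (p i))
      = map_pmf (?count X') (Pi_pmf X' False ?q)"
  proof -
    have "{x\<in>X'. lab x = i} = {x\<in>X. lab x = i}" if "i \<in> J" for i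
      using insert.hyps that by (auto simp: X'_def Xj_def)
    then have "Pi_pmf J 0 (\<lambda>i. binomial_pmf (card {x\<in>X. lab x = i}) (p i))
        = Pi_pmf J 0 (\<lambda>i. binomial_pmf (card {x\<in>X'. lab x = i}) (p i))"
      by (intro Pi_pmf_cong) auto
    then show ?thesis
      using insert.IH[OF fin(2) X'J] insert.prems(3) by simp
  qed
  have split: "Pi_pmf X False ?q
      = map_pmf (\<lambda>(f, g) x. if x \<in> Xj then f x else g x)
          (pair_pmf (Pi_pmf Xj False ?q) (Pi_pmf X' False ?q))"
  proof -
    have X: "X = Xj \<union> X'" "Xj \<inter> X' = {}" by (auto simp: Xj_def X'_def)
    show ?thesis unfolding X(1) by (rule Pi_pmf_union[OF fin X(2)])
  qed
  have merge: "?count X (\<lambda>x. if x \<in> Xj then f x else g x) = (?count X' g)(j := card {x\<in>Xj. f x})"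
    for f g
    by (auto simp: X'_def Xj_def fun_eq_iff intro!: arg_cong[where f=card])
  have "Pi_pmf (insert j J) 0 (\<lambda>i. binomial_pmf (card {x\<in>X. lab x = i}) (p i))
      = map_pmf (\<lambda>(y, f). f(j := y))
          (pair_pmf (binomial_pmf (card Xj) (p j))
            (Pi_pmf J 0 (\<lambda>i. binomial_pmf (card {x\<in>X. lab x = i}) (p i))))"
    using Pi_pmf_insert[OF insert.hyps] by (simp add: Xj_def)
  also have "\<dots> = map_pmf (\<lambda>(f, g). (?count X' g)(j := card {x\<in>Xj. f x}))
      (pair_pmf (Pi_pmf Xj False ?q) (Pi_pmf X' False ?q))"
    unfolding binom_j binom_J map_pair[symmetric] by (simp add: pmf.map_comp o_def split_def)
  also have "\<dots> = map_pmf (?count X) (Pi_pmf X False ?q)"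
    unfolding split by (simp add: pmf.map_comp o_def split_def merge)
  finally show ?case by simp
qed

lemma offspring_cong:
  assumes "\<And>j. j < r \<Longrightarrow> a j = b j"
  shows "offspring r a P t = offspring r b P t"
  unfolding offspring_def by (rule Pi_pmf_cong) (auto simp: assms)

lemma offspring_eq_count_Pi_bernoulli:
  fixes lab :: "'a \<Rightarrow> nat"
  assumes "finite X" "lab ` X \<subseteq> {..<r}" "\<And>j. j < r \<Longrightarrow> P t j \<in> {0..1}"
  shows "offspring r (\<lambda>j. card {x\<in>X. lab x = j}) P t
       = map_pmf (\<lambda>g j. card {x\<in>X. lab x = j \<and> g x})
           (Pi_pmf X False (\<lambda>x. bernoulli_pmf (P t (lab x))))"
  unfolding offspring_def using map_pmf_count_Pi_bernoulli[of "{..<r}" X lab "P t"] assms by simp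

definition type_count :: "(nat \<times> nat) set \<Rightarrow> nat \<Rightarrow> nat" where
  "type_count S j = card {u\<in>S. fst u = j}"

lemma type_count_union:
  "finite A \<Longrightarrow> finite B \<Longrightarrow> A \<inter> B = {} \<Longrightarrow> type_count (A \<union> B) = type_count A + type_count B"
  unfolding type_count_def plus_fun_def
  by (intro ext, subst card_Un_disjoint[symmetric]) (auto intro!: arg_cong[where f=card])

lemma type_count_singleton: "type_count {v} = unit_vec (fst v)"
proof
  fix j
  have "{u\<in>{v}. fst u = j} = (if j = fst v then {v} else {})" by auto
  then show "type_count {v} j = unit_vec (fst v) j" by (simp add: type_count_def unit_vec_def)
qed

lemma type_count_empty: "type_count {} = (\<lambda>_. 0)"
  by (simp add: type_count_def fun_eq_iff)

lemma type_count_le_card: "finite A \<Longrightarrow> type_count A j \<le> card A"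
  unfolding type_count_def by (rule card_mono) auto

lemma type_count_mono: "finite B \<Longrightarrow> A \<subseteq> B \<Longrightarrow> type_count A j \<le> type_count B j"
  unfolding type_count_def by (rule card_mono) auto

lemma finite_vertices: "finite (vertices r n)"
proof -
  have "vertices r n = Sigma {..<r} (\<lambda>i. {..<n i})" by (auto simp: vertices_def)
  then show ?thesis by simp
qed

lemma type_count_vertices: "j < r \<Longrightarrow> type_count (vertices r n) j = n j"
proof -
  assume "j < r"
  then have "{u\<in>vertices r n. fst u = j} = {j} \<times> {..<n j}" by (auto simp: vertices_def)
  then show ?thesis by (simp add: type_count_def card_cartesian_product)
qed

lemma type_count_remove:
  "finite S \<Longrightarrow> v \<in> S \<Longrightarrow> type_count S = unit_vec (fst v) + type_count (S - {v})"
proof -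
  assume "finite S" "v \<in> S"
  then have "type_count ({v} \<union> (S - {v})) = type_count {v} + type_count (S - {v})"
    by (intro type_count_union) auto
  with \<open>v \<in> S\<close> show ?thesis by (simp add: type_count_singleton insert_absorb)
qed

lemma type_count_vertices_remove:
  assumes "j < r" "v \<in> vertices r n"
  shows "n j \<le> type_count (vertices r n - {v}) j + 1"
  using type_count_remove[OF finite_vertices assms(2)] type_count_vertices[OF assms(1), of n]
  by (auto simp: unit_vec_def split: if_splits)

lemma type_count_le_vertices: "V \<subseteq> vertices r n \<Longrightarrow> j < r \<Longrightarrow> type_count V j \<le> n j"
  using type_count_mono[OF finite_vertices, of V r n j] by (simp add: type_count_vertices)

lemma offspring_eq_count_vertices:
  assumes "\<And>j. j < r \<Longrightarrow> P t j \<in> {0..1}"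
  shows "offspring r n P t = map_pmf (\<lambda>g j. card {x\<in>vertices r n. fst x = j \<and> g x})
           (Pi_pmf (vertices r n) False (\<lambda>x. bernoulli_pmf (P t (fst x))))"
proof -
  have "offspring r n P t = offspring r (type_count (vertices r n)) P t"
    by (rule offspring_cong) (simp add: type_count_vertices)
  also have "\<dots> = map_pmf (\<lambda>g j. card {x\<in>vertices r n. fst x = j \<and> g x})
           (Pi_pmf (vertices r n) False (\<lambda>x. bernoulli_pmf (P t (fst x))))"
    unfolding type_count_def
    by (rule offspring_eq_count_Pi_bernoulli)
       (use finite_vertices assms in \<open>auto simp: vertices_def\<close>)
  finally show ?thesis .
qed

text \<open>Coupling: the trials indexed by \<open>vertices r a\<close> are a subfamily of those indexed by
  \<open>vertices r b\<close>.\<close>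

lemma offspring_mono:
  fixes f :: "(nat \<Rightarrow> nat) \<Rightarrow> real"
  assumes le: "\<And>j. j < r \<Longrightarrow> a j \<le> b j" and P: "\<And>j. j < r \<Longrightarrow> P t j \<in> {0..1}"
    and mono: "\<And>y y'. (\<And>j. y j \<le> y' j) \<Longrightarrow> f y \<le> f y'" and bounded: "\<And>y. \<bar>f y\<bar> \<le> 1"
  shows "(\<integral>y. f y \<partial>offspring r a P t) \<le> (\<integral>y. f y \<partial>offspring r b P t)"
proof -
  let ?q = "\<lambda>x. bernoulli_pmf (P t (fst x))"
  let ?Va = "vertices r a" and ?Vb = "vertices r b"
  have sub: "?Va \<subseteq> ?Vb" using le by (auto simp: vertices_def intro: less_le_trans)
  have "(\<integral>y. f y \<partial>offspring r a P t)
      = (\<integral>g. f (\<lambda>j. card {x\<in>?Va. fst x = j \<and> g x}) \<partial>Pi_pmf ?Va False ?q)"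
    by (simp add: offspring_eq_count_vertices[where P=P and t=t, OF P])
  also have "\<dots> = (\<integral>g. f (\<lambda>j. card {x\<in>?Va. fst x = j \<and> (if x \<in> ?Va then g x else False)})
      \<partial>Pi_pmf ?Vb False ?q)"
    by (subst Pi_pmf_subset[OF finite_vertices sub]) simp
  also have "\<dots> \<le> (\<integral>g. f (\<lambda>j. card {x\<in>?Vb. fst x = j \<and> g x}) \<partial>Pi_pmf ?Vb False ?q)"
    by (intro integral_mono_pmf_bounded[where B=1] mono card_mono)
       (use sub finite_vertices bounded in auto)
  also have "\<dots> = (\<integral>y. f y \<partial>offspring r b P t)"
    by (simp add: offspring_eq_count_vertices[where P=P and t=t, OF P])
  finally show ?thesis .
qed

section \<open>Exploring the random graph\<close>

lemma card_filter_image: "inj_on f A \<Longrightarrow> card {y\<in>f ` A. P y} = card {x\<in>A. P (f x)}"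
proof -
  assume "inj_on f A"
  moreover have "{y\<in>f ` A. P y} = f ` {x\<in>A. P (f x)}" by auto
  ultimately show ?thesis by (simp add: card_image inj_on_subset)
qed

definition other_end :: "'a \<Rightarrow> 'a set \<Rightarrow> 'a" where
  "other_end v e = the_elem (e - {v})"

lemma other_end_doubleton [simp]: "u \<noteq> v \<Longrightarrow> other_end v {v, u} = u"
proof -
  assume "u \<noteq> v"
  then have "{v, u} - {v} = {u}" by auto
  then show ?thesis by (simp add: other_end_def)
qed

definition all_edges :: "'a set \<Rightarrow> 'a set set" where
  "all_edges V = {{u, w} | u w. u \<in> V \<and> w \<in> V \<and> u \<noteq> w}"

definition star_edges :: "'a \<Rightarrow> 'a set \<Rightarrow> 'a set set" where
  "star_edges v V = {{v, u} | u. u \<in> V \<and> u \<noteq> v}"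

definition new_neighbours :: "'a \<Rightarrow> 'a set \<Rightarrow> 'a set \<Rightarrow> ('a set \<Rightarrow> bool) \<Rightarrow> 'a set" where
  "new_neighbours v V S G = {u\<in>V - S. G {v, u}}"

definition random_graph ::
  "(nat \<Rightarrow> nat \<Rightarrow> real) \<Rightarrow> (nat \<times> nat) set \<Rightarrow> ((nat \<times> nat) set \<Rightarrow> bool) pmf" where
  "random_graph P V = Pi_pmf (all_edges V) False (\<lambda>e. bernoulli_pmf (edge_prob P e))"

definition reach :: "((nat \<times> nat) set \<Rightarrow> bool) \<Rightarrow> (nat \<times> nat) set \<Rightarrow> (nat \<times> nat) set" where
  "reach G S = (adj_rel G)\<^sup>* `` S"

definition cluster_size :: "(nat \<Rightarrow> nat \<Rightarrow> real) \<Rightarrow> (nat \<times> nat) set \<Rightarrow> (nat \<times> nat) set \<Rightarrow> nat pmf" where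
  "cluster_size P V S = map_pmf (\<lambda>G. card (reach G S)) (random_graph P V)"

lemma doubleton_in_all_edges_iff: "{a, b} \<in> all_edges V \<longleftrightarrow> a \<in> V \<and> b \<in> V \<and> a \<noteq> b"
  unfolding all_edges_def
  by (auto simp: doubleton_eq_iff simp del: split_paired_All split_paired_Ex)

lemma doubleton_in_star_edges_iff:
  "{a, b} \<in> star_edges v V \<longleftrightarrow> (a = v \<and> b \<in> V \<and> b \<noteq> v) \<or> (b = v \<and> a \<in> V \<and> a \<noteq> v)"
  unfolding star_edges_def
  by (auto simp: doubleton_eq_iff simp del: split_paired_All split_paired_Ex)

lemma finite_all_edges: "finite V \<Longrightarrow> finite (all_edges V)"
proof -
  have "all_edges V \<subseteq> (\<lambda>(u, w). {u, w}) ` (V \<times> V)" unfolding all_edges_def by auto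
  then show "finite V \<Longrightarrow> ?thesis" by (meson finite_SigmaI finite_imageI finite_subset)
qed

lemma finite_star_edges: "finite V \<Longrightarrow> finite (star_edges v V)"
proof -
  have "star_edges v V = (\<lambda>u. {v, u}) ` (V - {v})" unfolding star_edges_def by auto
  then show "finite V \<Longrightarrow> ?thesis" by simp
qed

lemma all_edges_remove: "v \<in> V \<Longrightarrow> all_edges V = star_edges v V \<union> all_edges (V - {v})"
  unfolding all_edges_def star_edges_def
  by (auto simp: doubleton_eq_iff simp del: split_paired_All split_paired_Ex)

lemma star_edges_disjoint: "star_edges v V \<inter> all_edges (V - {v}) = {}"
  unfolding all_edges_def star_edges_def
  by (auto simp: doubleton_eq_iff simp del: split_paired_All split_paired_Ex)

lemma edge_prob_doubleton:
  assumes "\<And>i j. i < r \<Longrightarrow> j < r \<Longrightarrow> P i j = P j i" "fst u < r" "fst w < r"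
  shows "edge_prob P {u, w} = P (fst u) (fst w)"
  unfolding edge_prob_def
proof (rule someI2)
  show "\<exists>a b. {u, w} = {a, b} \<and> P (fst u) (fst w) = P (fst a) (fst b)" by blast
next
  fix q assume "\<exists>a b. {u, w} = {a, b} \<and> q = P (fst a) (fst b)"
  then show "q = P (fst u) (fst w)"
    using assms by (auto simp: doubleton_eq_iff simp del: split_paired_All split_paired_Ex)
qed

lemma edges_random_graph:
  assumes "finite V" "G \<in> set_pmf (random_graph P V)" "G e"
  shows "e \<in> all_edges V"
  using set_Pi_pmf_subset[OF finite_all_edges[OF assms(1)], of False] assms(2,3)
  unfolding random_graph_def by fastforce

lemma subset_reach: "S \<subseteq> reach G S"
  unfolding reach_def by auto

lemma reach_empty [simp]: "reach G {} = {}"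
  unfolding reach_def by simp

lemma reach_subset:
  assumes "\<And>e. G e \<Longrightarrow> e \<in> all_edges V" "S \<subseteq> V"
  shows "reach G S \<subseteq> V"
proof
  fix x assume "x \<in> reach G S"
  then obtain s where s: "s \<in> S" "(s, x) \<in> (adj_rel G)\<^sup>*" unfolding reach_def by auto
  from s(2) show "x \<in> V"
  proof (induction rule: rtrancl_induct)
    case (step y z)
    then show ?case
      using assms(1)[of "{y, z}"] by (auto simp: adj_rel_def doubleton_in_all_edges_iff)
  qed (use s(1) assms(2) in auto)
qed

lemma reach_expose_subset:
  fixes G G' :: "(nat \<times> nat) set \<Rightarrow> bool" and v :: "nat \<times> nat" and V S
  defines "H \<equiv> \<lambda>e. if e \<in> star_edges v V then G e else G' e"
    and "S' \<equiv> (S - {v}) \<union> new_neighbours v V S G"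
  assumes G': "\<And>e. G' e \<Longrightarrow> e \<in> all_edges (V - {v})"
  shows "reach H S \<subseteq> insert v (reach G' S')"
proof
  fix x assume "x \<in> reach H S"
  then obtain s where s: "s \<in> S" "(s, x) \<in> (adj_rel H)\<^sup>*" unfolding reach_def by auto
  from s(2) show "x \<in> insert v (reach G' S')"
  proof (induction rule: rtrancl_induct)
    case base
    then show ?case using s(1) subset_reach[of S'] by (auto simp: S'_def new_neighbours_def)
  next
    case (step y z)
    then have "H {y, z}" by (simp add: adj_rel_def)
    show ?case
    proof (cases "{y, z} \<in> star_edges v V")
      case True
      with \<open>H {y, z}\<close> have "G {y, z}" by (simp add: H_def)
      moreover from True have "y = v \<and> z \<in> V \<and> z \<noteq> v \<or> z = v"
        by (auto simp: doubleton_in_star_edges_iff)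
      ultimately have "z \<in> S' \<or> z = v" by (auto simp: S'_def new_neighbours_def)
      then show ?thesis using subset_reach[of S'] by auto
    next
      case False
      with \<open>H {y, z}\<close> have "G' {y, z}" by (simp add: H_def)
      with step.IH G'[of "{y, z}"] have "(y, z) \<in> adj_rel G'" "y \<in> reach G' S'"
        by (auto simp: adj_rel_def doubleton_in_all_edges_iff)
      then show ?thesis
        unfolding reach_def by (meson Image_iff rtrancl.rtrancl_into_rtrancl insertI2)
    qed
  qed
qed

lemma reach_expose_supset:
  fixes G G' :: "(nat \<times> nat) set \<Rightarrow> bool" and v :: "nat \<times> nat" and V S
  defines "H \<equiv> \<lambda>e. if e \<in> star_edges v V then G e else G' e"
    and "S' \<equiv> (S - {v}) \<union> new_neighbours v V S G"
  assumes v: "v \<in> S" and G': "\<And>e. G' e \<Longrightarrow> e \<in> all_edges (V - {v})"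
  shows "insert v (reach G' S') \<subseteq> reach H S"
proof -
  have S'_reach: "S' \<subseteq> reach H S"
  proof
    fix s assume "s \<in> S'"
    show "s \<in> reach H S"
    proof (cases "s \<in> S")
      case False
      with \<open>s \<in> S'\<close> v have "(v, s) \<in> adj_rel H"
        by (auto simp: S'_def new_neighbours_def adj_rel_def H_def doubleton_in_star_edges_iff)
      then show ?thesis using v unfolding reach_def by auto
    qed (auto simp: reach_def)
  qed
  have "G' {a, b} \<Longrightarrow> a \<noteq> v \<and> b \<noteq> v" for a b
    using G'[of "{a, b}"] by (auto simp: doubleton_in_all_edges_iff)
  then have "adj_rel G' \<subseteq> adj_rel H"
    by (auto simp: adj_rel_def H_def doubleton_in_star_edges_iff)
  then have "reach G' S' \<subseteq> reach H S'"
    unfolding reach_def using rtrancl_mono by blast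
  also have "\<dots> \<subseteq> reach H S"
    using S'_reach unfolding reach_def by (auto intro: rtrancl_trans)
  finally show ?thesis using v subset_reach by auto
qed

definition star_graph ::
  "(nat \<Rightarrow> nat \<Rightarrow> real) \<Rightarrow> nat \<times> nat \<Rightarrow> (nat \<times> nat) set \<Rightarrow> ((nat \<times> nat) set \<Rightarrow> bool) pmf"
where
  "star_graph P v V = Pi_pmf (star_edges v V) False (\<lambda>e. bernoulli_pmf (edge_prob P e))"

lemma card_reach_expose:
  assumes "finite V" "v \<in> S" "S \<subseteq> V" "\<And>e. G' e \<Longrightarrow> e \<in> all_edges (V - {v})"
  shows "card (reach (\<lambda>e. if e \<in> star_edges v V then G e else G' e) S)
       = Suc (card (reach G' ((S - {v}) \<union> new_neighbours v V S G)))"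
proof -
  let ?S' = "(S - {v}) \<union> new_neighbours v V S G"
  have eq: "reach (\<lambda>e. if e \<in> star_edges v V then G e else G' e) S = insert v (reach G' ?S')"
    using reach_expose_subset[of G' V v G S] reach_expose_supset[of v S G' V G] assms(2,4) by blast
  have "reach G' ?S' \<subseteq> V - {v}"
    by (rule reach_subset) (use assms in \<open>auto simp: new_neighbours_def\<close>)
  then have "finite (reach G' ?S')" "v \<notin> reach G' ?S'"
    using assms(1) by (auto intro: finite_subset)
  then show ?thesis unfolding eq by simp
qed

lemma cluster_size_expose:
  assumes V: "finite V" and v: "v \<in> S" and S: "S \<subseteq> V"
  shows "cluster_size P V S = bind_pmf (star_graph P v V)
           (\<lambda>G. map_pmf Suc (cluster_size P (V - {v}) ((S - {v}) \<union> new_neighbours v V S G)))"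
proof -
  let ?A = "star_graph P v V"
  let ?B = "random_graph P (V - {v})"
  let ?join = "\<lambda>G G' e. if e \<in> star_edges v V then G e else G' e"
  have "v \<in> V" using v S by auto
  have "random_graph P V = map_pmf (\<lambda>(G, G'). ?join G G') (pair_pmf ?A ?B)"
    unfolding random_graph_def star_graph_def all_edges_remove[OF \<open>v \<in> V\<close>]
    by (rule Pi_pmf_union) (auto simp: finite_star_edges finite_all_edges V star_edges_disjoint)
  then have "cluster_size P V S = bind_pmf ?A (\<lambda>G. map_pmf (\<lambda>G'. card (reach (?join G G') S)) ?B)"
    unfolding cluster_size_def
    by (simp add: pair_pmf_def map_bind_pmf map_pmf_def bind_assoc_pmf bind_return_pmf)
  also have "\<dots> = bind_pmf ?A
      (\<lambda>G. map_pmf Suc (cluster_size P (V - {v}) ((S - {v}) \<union> new_neighbours v V S G)))"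
    unfolding cluster_size_def pmf.map_comp o_def
  proof (intro bind_pmf_cong refl map_pmf_cong)
    fix G G' assume "G' \<in> set_pmf ?B"
    then have "G' e \<Longrightarrow> e \<in> all_edges (V - {v})" for e
      using V by (intro edges_random_graph[where G = G']) auto
    then show "card (reach (?join G G') S)
        = Suc (card (reach G' ((S - {v}) \<union> new_neighbours v V S G)))"
      by (rule card_reach_expose[OF V v S])
  qed
  finally show ?thesis .
qed

lemma neighbour_type_count_distrib:
  assumes V: "finite V" and types: "fst ` V \<subseteq> {..<r}" and v: "v \<in> S" "S \<subseteq> V"
    and symP: "\<And>i j. i < r \<Longrightarrow> j < r \<Longrightarrow> P i j = P j i"
    and P: "\<And>j. j < r \<Longrightarrow> P (fst v) j \<in> {0..1}"
  shows "map_pmf (\<lambda>G. type_count (new_neighbours v V S G)) (star_graph P v V)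
       = offspring r (type_count (V - S)) P (fst v)"
proof -
  define X where "X = (\<lambda>u. {v, u}) ` (V - S)"
  define lab where "lab e = fst (other_end v e)" for e
  have other_end: "other_end v {v, u} = u" if "u \<notin> S" for u
    using that v by (intro other_end_doubleton) auto
  have "inj_on (\<lambda>u. {v, u}) (V - S)" by (auto simp: inj_on_def doubleton_eq_iff)
  then have count: "card {e\<in>X. lab e = j \<and> Q e} = card {u\<in>V - S. fst u = j \<and> Q {v, u}}" for j Q
    unfolding X_def lab_def
    by (subst card_filter_image) (auto simp: other_end intro!: arg_cong[where f=card])
  have lab_X: "lab e < r" "edge_prob P e = P (fst v) (lab e)" if "e \<in> X" for e
  proof -
    from that v obtain u where u: "u \<in> V - S" "e = {v, u}" "u \<noteq> v" by (auto simp: X_def)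
    then have "fst u < r" "fst v < r" using types v by auto
    then show "lab e < r" "edge_prob P e = P (fst v) (lab e)"
      using u edge_prob_doubleton[OF symP] by (auto simp: lab_def)
  qed
  have X: "finite X" "X \<subseteq> star_edges v V" "lab ` X \<subseteq> {..<r}"
    using V v lab_X by (auto simp: X_def star_edges_def)
  let ?count = "\<lambda>g j. card {e\<in>X. lab e = j \<and> g e}"
  have "(\<lambda>G. type_count (new_neighbours v V S G)) = ?count \<circ> (\<lambda>G e. if e \<in> X then G e else False)"
    unfolding type_count_def new_neighbours_def o_def count
    by (intro ext arg_cong[where f=card]) (auto simp: X_def)
  then have "map_pmf (\<lambda>G. type_count (new_neighbours v V S G)) (star_graph P v V)
      = map_pmf ?count (Pi_pmf X False (\<lambda>e. bernoulli_pmf (edge_prob P e)))"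
    by (simp add: star_graph_def Pi_pmf_subset[OF finite_star_edges[OF V] X(2)] pmf.map_comp)
  also have "\<dots> = map_pmf ?count (Pi_pmf X False (\<lambda>e. bernoulli_pmf (P (fst v) (lab e))))"
    by (simp add: lab_X cong: Pi_pmf_cong)
  also have "\<dots> = offspring r (\<lambda>j. card {e\<in>X. lab e = j}) P (fst v)"
    by (rule offspring_eq_count_Pi_bernoulli[symmetric]) (use X P in auto)
  also have "(\<lambda>j. card {e\<in>X. lab e = j}) = type_count (V - S)"
    using count[where Q = "\<lambda>_. True"] by (auto simp: type_count_def fun_eq_iff)
  finally show ?thesis .
qed

lemma type_count_explore:
  assumes "finite V" "S \<subseteq> V"
  shows "type_count ((S - {v}) \<union> new_neighbours v V S G)
       = type_count (S - {v}) + type_count (new_neighbours v V S G)"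
  by (rule type_count_union) (use assms in \<open>auto simp: new_neighbours_def intro: finite_subset\<close>)

lemma cluster_size_empty: "cluster_size P V {} = return_pmf 0"
  unfolding cluster_size_def by simp

lemma tail_prob_cluster_size_ge_card:
  assumes "finite V" "S \<subseteq> V" "k \<le> card S"
  shows "tail_prob (cluster_size P V S) k = 1"
proof -
  have "k \<le> card (reach G S)" if "G \<in> set_pmf (random_graph P V)" for G
  proof -
    have "reach G S \<subseteq> V"
      by (rule reach_subset[OF _ assms(2)]) (use edges_random_graph[OF assms(1) that] in blast)
    then have "card S \<le> card (reach G S)"
      using assms(1) by (intro card_mono subset_reach) (auto intro: finite_subset)
    then show ?thesis using assms(3) by simp
  qed
  then show ?thesis
    unfolding tail_prob_def cluster_size_def
    by (simp add: measure_pmf.prob_eq_1 AE_measure_pmf_iff)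
qed

lemma tail_prob_cluster_size_Suc:
  assumes "finite V" "v \<in> S" "S \<subseteq> V"
  shows "tail_prob (cluster_size P V S) (Suc k)
       = (\<integral>G. tail_prob (cluster_size P (V - {v}) ((S - {v}) \<union> new_neighbours v V S G)) k
            \<partial>star_graph P v V)"
  unfolding cluster_size_expose[OF assms] tail_prob_bind_pmf by simp

section \<open>Comparison of component sizes and Galton-Watson populations\<close>

lemma type_count_budget_step:
  assumes "finite V" "v \<in> S" "S \<subseteq> V" "N \<subseteq> V - S"
    and "m + Suc k \<le> type_count (V - S) j + card S"
  shows "m + k \<le> type_count ((V - {v}) - ((S - {v}) \<union> N)) j + card ((S - {v}) \<union> N)"
proof -
  have fin: "finite S" "finite N" "finite (V - S - N)"
    using assms(1,3,4) by (auto intro: finite_subset)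
  have "type_count (V - S) = type_count ((V - S - N) \<union> N)"
    using assms(4) by (simp add: Un_absorb2)
  also have "\<dots> = type_count (V - S - N) + type_count N"
    using fin by (intro type_count_union) auto
  finally have "type_count (V - S) j \<le> type_count (V - S - N) j + card N"
    using type_count_le_card[OF fin(2), of j] by simp
  moreover have "(V - {v}) - ((S - {v}) \<union> N) = V - S - N" using assms(2) by auto
  moreover have "card ((S - {v}) \<union> N) = card S - 1 + card N"
    using fin assms(2,4) by (subst card_Un_disjoint) auto
  moreover have "card S \<ge> 1" using fin assms(2) by (auto simp: Suc_le_eq card_gt_0_iff)
  ultimately show ?thesis using assms(5) by simp
qed

lemma tail_prob_cluster_size_le_gw:
  assumes symP: "\<And>i j. i < r \<Longrightarrow> j < r \<Longrightarrow> P i j = P j i"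
    and P: "\<And>i j. i < r \<Longrightarrow> j < r \<Longrightarrow> P i j \<in> {0..1}"
    and "V \<subseteq> vertices r n" "S \<subseteq> V"
  shows "tail_prob (cluster_size P V S) k \<le> tail_prob (gw_pop r n P (type_count S) k) k"
  using assms(3,4)
proof (induction k arbitrary: V S)
  case (Suc k)
  have V: "finite V" "fst ` V \<subseteq> {..<r}"
    using Suc.prems finite_subset[OF _ finite_vertices] by (auto simp: vertices_def)
  show ?case
  proof (cases "S = {}")
    case False
    then obtain v where v: "v \<in> S" by auto
    define x where "x = type_count (S - {v})"
    define N where "N = new_neighbours v V S"
    define f where "f y = tail_prob (gw_pop r n P (x + y) k) k" for y
    have t: "fst v < r" and S: "finite S" using V v Suc.prems by (auto intro: finite_subset)
    have row: "\<And>j. j < r \<Longrightarrow> P (fst v) j \<in> {0..1}" using P t by auto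
    have "tail_prob (cluster_size P V S) (Suc k)
        = (\<integral>G. tail_prob (cluster_size P (V - {v}) ((S - {v}) \<union> N G)) k \<partial>star_graph P v V)"
      unfolding N_def by (rule tail_prob_cluster_size_Suc[OF V(1) v Suc.prems(2)])
    also have "\<dots> \<le> (\<integral>G. f (type_count (N G)) \<partial>star_graph P v V)"
    proof (rule integral_mono_pmf_bounded[where B=1])
      fix G
      have "tail_prob (cluster_size P (V - {v}) ((S - {v}) \<union> N G)) k
          \<le> tail_prob (gw_pop r n P (type_count ((S - {v}) \<union> N G)) k) k"
        by (rule Suc.IH) (use Suc.prems v in \<open>auto simp: N_def new_neighbours_def\<close>)
      then show "tail_prob (cluster_size P (V - {v}) ((S - {v}) \<union> N G)) k \<le> f (type_count (N G))"
        by (simp add: f_def x_def N_def type_count_explore[OF V(1) Suc.prems(2)])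
    qed (auto simp: f_def tail_prob_bounds)
    also have "\<dots> = (\<integral>y. f y \<partial>offspring r (type_count (V - S)) P (fst v))"
      unfolding N_def
      by (simp flip: neighbour_type_count_distrib[where P = P, OF V v Suc.prems(2) symP row])
    also have "\<dots> \<le> (\<integral>y. f y \<partial>offspring r n P (fst v))"
      using Suc.prems(1) row
      by (intro offspring_mono type_count_le_vertices)
         (auto simp: f_def tail_prob_bounds intro: tail_prob_gw_pop_mono_init add_mono)
    also have "\<dots> = tail_prob (gw_first_step r n P (fst v) x k) (Suc k)"
      by (simp add: tail_prob_gw_first_step_Suc f_def)
    also have "\<dots> \<le> tail_prob (gw_pop r n P (unit_vec (fst v) + x) (Suc k)) (Suc k)"
      by (rule tail_prob_gw_first_step_le[OF t])
    finally show ?thesis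
      by (simp only: type_count_remove[OF S v] x_def)
  qed (simp add: cluster_size_empty tail_prob_return_pmf tail_prob_bounds)
qed simp

text \<open>The last hypothesis guarantees at least \<open>m j\<close> unreached vertices of each type \<open>j\<close> as
  long as fewer than \<open>k\<close> vertices have been reached.\<close>

lemma tail_prob_gw_le_cluster_size:
  assumes symP: "\<And>i j. i < r \<Longrightarrow> j < r \<Longrightarrow> P i j = P j i"
    and P: "\<And>i j. i < r \<Longrightarrow> j < r \<Longrightarrow> P i j \<in> {0..1}"
    and "finite V" "fst ` V \<subseteq> {..<r}" "S \<subseteq> V"
    and "\<And>j. j < r \<Longrightarrow> m j + k \<le> type_count (V - S) j + card S"
  shows "tail_prob (gw_pop r m P (type_count S) T) k \<le> tail_prob (cluster_size P V S) k"
  using assms(3-)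
proof (induction k arbitrary: V S)
  case (Suc k)
  note V = Suc.prems(1,2)
  have S: "finite S" using V Suc.prems(3) finite_subset by blast
  consider "Suc k \<le> card S" | "S = {}" | v where "v \<in> S" "card S \<le> k"
    by fastforce
  then show ?case
  proof cases
    case 1
    then show ?thesis
      using tail_prob_cluster_size_ge_card[OF V(1) Suc.prems(3)] by (simp add: tail_prob_bounds)
  next
    case 2
    then show ?thesis
      by (simp add: type_count_empty gw_pop_zero tail_prob_return_pmf tail_prob_bounds)
  next
    case 3
    note v = \<open>v \<in> S\<close>
    define x where "x = type_count (S - {v})"
    define N where "N = new_neighbours v V S"
    define f where "f y = tail_prob (gw_pop r m P (x + y) T) k" for y
    have t: "fst v < r" using V v Suc.prems by auto
    have row: "\<And>j. j < r \<Longrightarrow> P (fst v) j \<in> {0..1}" using P t by auto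
    have "tail_prob (gw_pop r m P (unit_vec (fst v) + x) T) (Suc k)
        \<le> tail_prob (gw_first_step r m P (fst v) x T) (Suc k)"
      by (rule tail_prob_le_gw_first_step[OF t])
    also have "\<dots> = (\<integral>y. f y \<partial>offspring r m P (fst v))"
      by (simp add: tail_prob_gw_first_step_Suc f_def)
    also have "\<dots> \<le> (\<integral>y. f y \<partial>offspring r (type_count (V - S)) P (fst v))"
      using row Suc.prems(4) \<open>card S \<le> k\<close>
      by (intro offspring_mono)
         (fastforce simp: f_def tail_prob_bounds intro: tail_prob_gw_pop_mono_init add_mono)+
    also have "\<dots> = (\<integral>G. f (type_count (N G)) \<partial>star_graph P v V)"
      unfolding N_def
      by (simp flip: neighbour_type_count_distrib[where P = P, OF V v Suc.prems(3) symP row])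
    also have "\<dots> \<le> (\<integral>G. tail_prob (cluster_size P (V - {v}) ((S - {v}) \<union> N G)) k \<partial>star_graph P v V)"
    proof (rule integral_mono_pmf_bounded[where B=1])
      fix G
      have "tail_prob (gw_pop r m P (type_count ((S - {v}) \<union> N G)) T) k
          \<le> tail_prob (cluster_size P (V - {v}) ((S - {v}) \<union> N G)) k"
        using V Suc.prems(3,4) v
        by (intro Suc.IH type_count_budget_step) (auto simp: N_def new_neighbours_def)
      then show "f (type_count (N G)) \<le> tail_prob (cluster_size P (V - {v}) ((S - {v}) \<union> N G)) k"
        by (simp add: f_def x_def N_def type_count_explore[OF V(1) Suc.prems(3)])
    qed (auto simp: f_def tail_prob_bounds)
    also have "\<dots> = tail_prob (cluster_size P V S) (Suc k)"
      unfolding N_def by (rule tail_prob_cluster_size_Suc[OF V(1) v Suc.prems(3), symmetric])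
    finally show ?thesis
      by (simp only: type_count_remove[OF S v] x_def)
  qed
qed simp

theorem lemma3p2:
  fixes r k :: nat and P :: "nat \<Rightarrow> nat \<Rightarrow> real" and Tv n :: "nat \<Rightarrow> nat"
    and i a :: nat
  assumes symP: "\<And>i j. i < r \<Longrightarrow> j < r \<Longrightarrow> P i j = P j i"
    and P_nonneg: "\<And>i j. i < r \<Longrightarrow> j < r \<Longrightarrow> 0 \<le> P i j"
    and P_le1: "\<And>i j. i < r \<Longrightarrow> j < r \<Longrightarrow> P i j \<le> 1"
    and kT: "\<And>j. j < r \<Longrightarrow> k \<le> Tv j"
    and Tn: "\<And>j. j < r \<Longrightarrow> Tv j \<le> n j"
    and i: "i < r"
    and a: "a < n i"
  shows "gw_pop_ge_prob r (\<lambda>j. n j - Tv j) P (unit_vec i) k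
           \<le> measure_pmf.prob (Gnp r n P) {G. k \<le> card (CC G (i, a))}
       \<and> measure_pmf.prob (Gnp r n P) {G. k \<le> card (CC G (i, a))}
           \<le> gw_pop_ge_prob r n P (unit_vec i) k"
proof -
  let ?V = "vertices r n" and ?S = "{(i, a)}"
  have P: "\<And>i j. i < r \<Longrightarrow> j < r \<Longrightarrow> P i j \<in> {0..1}" using P_nonneg P_le1 by auto
  have S: "?S \<subseteq> ?V" and types: "fst ` ?V \<subseteq> {..<r}" using i a by (auto simp: vertices_def)
  have type_count_S: "type_count ?S = unit_vec i" by (simp add: type_count_singleton)
  have bdd: "bdd_above (range (\<lambda>T. tail_prob (gw_pop r m P (unit_vec i) T) k))" for m
    by (rule bdd_aboveI[where M=1]) (auto simp: tail_prob_bounds)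
  have budget: "n j - Tv j + k \<le> type_count (?V - ?S) j + card ?S" if "j < r" for j
    using type_count_vertices_remove[OF that, of "(i, a)"] S kT[OF that] Tn[OF that] by force
  have "measure_pmf.prob (Gnp r n P) {G. k \<le> card (CC G (i, a))}
      = tail_prob (cluster_size P ?V ?S) k"
    by (simp add: Gnp_def random_graph_def pot_edges_def all_edges_def cluster_size_def
        tail_prob_def CC_def reach_def vimage_def)
  moreover have "tail_prob (cluster_size P ?V ?S) k \<le> gw_pop_ge_prob r n P (unit_vec i) k"
    using tail_prob_cluster_size_le_gw[OF symP P order_refl S] cSUP_upper[OF UNIV_I bdd]
    unfolding gw_pop_ge_prob_eq_SUP type_count_S by (rule order_trans)
  moreover have "gw_pop_ge_prob r (\<lambda>j. n j - Tv j) P (unit_vec i) k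
      \<le> tail_prob (cluster_size P ?V ?S) k"
    unfolding gw_pop_ge_prob_eq_SUP
    using tail_prob_gw_le_cluster_size[OF symP P finite_vertices types S budget] type_count_S
    by (intro cSUP_least) auto
  ultimately show ?thesis by simp
qed

end
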